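(* Let $Y\subset\mathbb C^n$ be a $k$-dimensional subspace and $a\in(\mathbb C^\times)^n$, and assume that for every $j$, $Y\not\subset\{q_j=0\}$ and $Y^\perp\not\subset\{p_j=0\}$. Let $I\subset\{1,\dots,n\}$ be a $k$-element subset with complement $\bar I$ such that the functions $q_I=\{q_i:i\in I\}$ form a coordinate system on $Y$. Then the functions $q_I$ and $p_{\bar I}=\{p_j:j\in\bar I\}$ form a coordinate system on $L_{Y,a}$.
   Context: $\mathbb C^n$ has coordinates $q_1,\dots,q_n$, the dual space $(\mathbb C^n)^*$ has dual coordinates $p_1,\dots,p_n$. $Y^\perp\subset(\mathbb C^n)^*$ is the annihilator of $Y$. The map $r_a(q,p)=(q_1+a_1/p_1,\dots,q_n+a_n/p_n,p_1,\dots,p_n)$ is defined where all $p_j\ne0$, and $L_{Y,a}=r_a(Y\times Y^\perp)\subset\mathbb C^n\times(\mathbb C^n)^*$ (image of the points of $Y\times Y^\perp$ with all $p_j\ne0$); it is the smooth variety in $\mathbb C^n\times\{\prod_jp_j\ne0\}$ given by $\sum_j\alpha_jp_j=0$ ($\alpha\in Y$) and $\sum_j\beta_j(q_j-a_j/p_j)=0$ ($\beta\in Y^\perp$). *)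

theory Defs
  imports "HOL-Analysis.Analysis"
begin

text \<open>C^n is modelled as complex^'n (index type 'n finite); the dual space
  (C^n)^* is identified with complex^'n via the pairing below.\<close>

definition pairing :: "complex^'n \<Rightarrow> complex^'n \<Rightarrow> complex" where
  "pairing p y = (\<Sum>j\<in>UNIV. p$j * y$j)"

definition annihilator :: "(complex^'n) set \<Rightarrow> (complex^'n) set" where
  "annihilator Y = {p. \<forall>y\<in>Y. pairing p y = 0}"

definition r_map :: "complex^'n \<Rightarrow> (complex^'n) \<times> (complex^'n) \<Rightarrow> (complex^'n) \<times> (complex^'n)" where
  "r_map a qp = ((\<chi> j. fst qp $ j + a$j / snd qp $ j), snd qp)"

definition L_set :: "(complex^'n) set \<Rightarrow> complex^'n \<Rightarrow> ((complex^'n) \<times> (complex^'n)) set" where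
  "L_set Y a = r_map a ` {(q,p). q \<in> Y \<and> p \<in> annihilator Y \<and> (\<forall>j. p$j \<noteq> 0)}"

definition coords_on_subspace :: "'n set \<Rightarrow> (complex^'n) set \<Rightarrow> bool" where
  "coords_on_subspace I Y \<longleftrightarrow>
     (\<forall>y\<in>Y. (\<forall>i\<in>I. y$i = 0) \<longrightarrow> y = 0) \<and>
     (\<forall>c::complex^'n. \<exists>y\<in>Y. \<forall>i\<in>I. y$i = c$i)"

definition coord_map :: "'n set \<Rightarrow> (complex^'n) \<times> (complex^'n) \<Rightarrow> complex^'n" where
  "coord_map I qp = (\<chi> j. if j \<in> I then fst qp $ j else snd qp $ j)"

text \<open>A map into C^n x C^n (viewed as a complex vector space) is holomorphic at x:
  Frechet differentiable with complex-linear derivative.\<close>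
definition cholo_at :: "(complex^'n \<Rightarrow> (complex^'n) \<times> (complex^'n)) \<Rightarrow> complex^'n \<Rightarrow> bool" where
  "cholo_at f x \<longleftrightarrow> (\<exists>D. (f has_derivative D) (at x) \<and>
      (\<forall>c v. D (c *s v) = (c *s fst (D v), c *s snd (D v))))"

definition coordinate_system_on :: "((complex^'n) \<times> (complex^'n) \<Rightarrow> complex^'n) \<Rightarrow> ((complex^'n) \<times> (complex^'n)) set \<Rightarrow> bool" where
  "coordinate_system_on F L \<longleftrightarrow> (\<exists>U \<psi>. open U \<and> bij_betw F L U \<and>
      (\<forall>z\<in>L. \<psi> (F z) = z) \<and> (\<forall>x\<in>U. cholo_at \<psi> x))"

end

theory Submission imports Defs begin

text \<open>Since the \<open>q_I\<close> are coordinates on \<open>Y\<close>, there are \<open>e_i \<in> Y\<close> (\<open>i \<in> I\<close>) whose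
  \<open>I\<close>-coordinates form the identity matrix, and every \<open>y \<in> Y\<close> equals \<open>\<Sum>i\<in>I. y_i e_i\<close>. Pairing
  \<open>p \<in> Y\<^sup>\<perp>\<close> with \<open>e_i\<close> gives \<open>p_i = - (\<Sum>l\<notin>I. p_l (e_i)_l)\<close>, so \<open>p\<close> is a linear function of
  \<open>p_{I-bar}\<close>. Hence \<open>r_a(q, p)\<close> is recovered from \<open>x = (q_I + a_I/p_I, p_{I-bar})\<close>: first \<open>p\<close>
  from \<open>x_{I-bar}\<close>, then \<open>q_I = x_I - a_I/p_I\<close> and \<open>q = \<Sum>i\<in>I. q_i e_i\<close>. This inverse is
  rational in \<open>x\<close>, defined on the open set where all \<open>p_j\<close> are nonzero.\<close>

lemma has_derivative_vec_lambda:
  fixes F :: "'n::finite \<Rightarrow> 'a::real_normed_vector \<Rightarrow> complex"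
  assumes "\<And>j. (F j has_derivative D j) (at x)"
  shows "((\<lambda>x. \<chi> j. F j x) has_derivative (\<lambda>v. \<chi> j. D j v)) (at x)"
  apply (subst has_derivative_componentwise_within)
  apply (auto simp: Basis_vec_def inner_axis)
  apply (rule bounded_linear.has_derivative[OF bounded_linear_inner_left])
  apply (rule assms)
  done

definition scalar_holo_at :: "(complex^'n \<Rightarrow> complex) \<Rightarrow> complex^'n \<Rightarrow> bool" where
  "scalar_holo_at f x \<longleftrightarrow> (\<exists>D. (f has_derivative D) (at x) \<and> (\<forall>c v. D (c *s v) = c * D v))"

lemma scalar_holo_at_const: "scalar_holo_at (\<lambda>x. c) x"
  unfolding scalar_holo_at_def by (rule exI[of _ "\<lambda>v. 0"]) auto

lemma scalar_holo_at_nth: "scalar_holo_at (\<lambda>x. x $ l) x"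
  unfolding scalar_holo_at_def
  by (rule exI[of _ "\<lambda>v. v $ l"]) (auto intro: bounded_linear.has_derivative[OF bounded_linear_vec_nth])

lemma scalar_holo_at_add:
  assumes "scalar_holo_at f x" "scalar_holo_at g x"
  shows "scalar_holo_at (\<lambda>x. f x + g x) x"
proof -
  obtain D E where "(f has_derivative D) (at x)" "\<forall>c v. D (c *s v) = c * D v"
    "(g has_derivative E) (at x)" "\<forall>c v. E (c *s v) = c * E v"
    using assms unfolding scalar_holo_at_def by blast
  then show ?thesis unfolding scalar_holo_at_def
    by (intro exI[of _ "\<lambda>v. D v + E v"]) (auto intro: has_derivative_add simp: algebra_simps)
qed

lemma scalar_holo_at_minus:
  assumes "scalar_holo_at f x"
  shows "scalar_holo_at (\<lambda>x. - f x) x"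
proof -
  obtain D where "(f has_derivative D) (at x)" "\<forall>c v. D (c *s v) = c * D v"
    using assms unfolding scalar_holo_at_def by blast
  then show ?thesis unfolding scalar_holo_at_def
    by (intro exI[of _ "\<lambda>v. - D v"]) (auto intro: has_derivative_minus)
qed

lemma scalar_holo_at_diff:
  "scalar_holo_at f x \<Longrightarrow> scalar_holo_at g x \<Longrightarrow> scalar_holo_at (\<lambda>x. f x - g x) x"
  using scalar_holo_at_add[of f x "\<lambda>x. - g x"] scalar_holo_at_minus[of g x] by simp

lemma scalar_holo_at_mult:
  assumes "scalar_holo_at f x" "scalar_holo_at g x"
  shows "scalar_holo_at (\<lambda>x. f x * g x) x"
proof -
  obtain D E where D: "(f has_derivative D) (at x)" "\<forall>c v. D (c *s v) = c * D v"
    and E: "(g has_derivative E) (at x)" "\<forall>c v. E (c *s v) = c * E v"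
    using assms unfolding scalar_holo_at_def by blast
  have "((\<lambda>x. f x * g x) has_derivative (\<lambda>h. f x * E h + D h * g x)) (at x)"
    using D(1) E(1) by (rule has_derivative_mult)
  then show ?thesis unfolding scalar_holo_at_def
    using D(2) E(2) by (intro exI[of _ "\<lambda>h. f x * E h + D h * g x"]) (auto simp: algebra_simps)
qed

lemma scalar_holo_at_divide:
  assumes "scalar_holo_at f x" "scalar_holo_at g x" "g x \<noteq> 0"
  shows "scalar_holo_at (\<lambda>x. f x / g x) x"
proof -
  obtain D E where D: "(f has_derivative D) (at x)" "\<forall>c v. D (c *s v) = c * D v"
    and E: "(g has_derivative E) (at x)" "\<forall>c v. E (c *s v) = c * E v"
    using assms unfolding scalar_holo_at_def by blast
  have "((\<lambda>x. f x / g x) has_derivative (\<lambda>h. (D h * g x - f x * E h) / (g x * g x))) (at x)"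
    using D(1) E(1) assms(3) by (rule has_derivative_divide')
  then show ?thesis unfolding scalar_holo_at_def using D(2) E(2)
    by (intro exI[of _ "\<lambda>h. (D h * g x - f x * E h) / (g x * g x)"])
       (auto simp: algebra_simps diff_divide_distrib)
qed

lemma scalar_holo_at_sum:
  "finite A \<Longrightarrow> (\<And>i. i \<in> A \<Longrightarrow> scalar_holo_at (f i) x) \<Longrightarrow> scalar_holo_at (\<lambda>x. \<Sum>i\<in>A. f i x) x"
  by (induction A rule: finite_induct) (simp_all add: scalar_holo_at_const scalar_holo_at_add)

lemma scalar_holo_at_continuous: "scalar_holo_at f x \<Longrightarrow> isCont f x"
  unfolding scalar_holo_at_def using has_derivative_continuous by blast

lemma cholo_at_vec_lambda_Pair:
  assumes "\<And>j. scalar_holo_at (Q j) x" "\<And>j. scalar_holo_at (P j) x"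
  shows "cholo_at (\<lambda>x. ((\<chi> j. Q j x), (\<chi> j. P j x))) x"
proof -
  obtain DQ where DQ: "\<And>j. (Q j has_derivative DQ j) (at x) \<and> (\<forall>c v. DQ j (c *s v) = c * DQ j v)"
    using assms(1) unfolding scalar_holo_at_def by metis
  obtain DP where DP: "\<And>j. (P j has_derivative DP j) (at x) \<and> (\<forall>c v. DP j (c *s v) = c * DP j v)"
    using assms(2) unfolding scalar_holo_at_def by metis
  show ?thesis unfolding cholo_at_def
    apply (rule exI[of _ "\<lambda>v. ((\<chi> j. DQ j v), (\<chi> j. DP j v))"])
    apply (intro conjI has_derivative_Pair has_derivative_vec_lambda)
    using DQ DP by (auto simp: vec_eq_iff)
qed

lemma sum_UNIV_Compl_split:
  fixes f :: "'n::finite \<Rightarrow> 'a::comm_monoid_add"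
  shows "(\<Sum>j\<in>UNIV. f j) = (\<Sum>j\<in>I. f j) + (\<Sum>j\<in>-I. f j)"
  using sum.subset_diff[of I UNIV f] by (simp add: Compl_eq_Diff_UNIV add.commute)

locale dual_coord_basis =
  fixes Y :: "(complex^'n) set" and I :: "'n set" and e :: "'n \<Rightarrow> complex^'n"
  assumes subspace: "vec.subspace Y"
    and coords: "coords_on_subspace I Y"
    and basis_in: "e i \<in> Y"
    and basis_nth: "i' \<in> I \<Longrightarrow> e i $ i' = (if i' = i then 1 else 0)"
begin

definition expand :: "complex^'n \<Rightarrow> complex^'n" where
  "expand c = (\<Sum>i\<in>I. c$i *s e i)"

definition ann_lift :: "complex^'n \<Rightarrow> complex^'n" where
  "ann_lift c = (\<chi> j. if j \<in> I then - (\<Sum>l\<in>-I. c$l * e j $ l) else c$j)"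

lemma expand_nth: "i' \<in> I \<Longrightarrow> expand c $ i' = c $ i'"
  unfolding expand_def by (simp add: basis_nth if_distrib cong: if_cong)

lemma expand_in_subspace: "expand c \<in> Y"
  unfolding expand_def using subspace basis_in
  by (intro vec.subspace_sum) (auto intro: vec.subspace_scale)

lemma expand_cong: "(\<forall>i\<in>I. c$i = d$i) \<Longrightarrow> expand c = expand d"
  unfolding expand_def by (intro sum.cong) auto

lemma expand_coords:
  assumes "y \<in> Y"
  shows "expand y = y"
proof -
  have "y - expand y \<in> Y"
    using subspace assms expand_in_subspace by (intro vec.subspace_diff)
  moreover have "\<forall>i\<in>I. (y - expand y) $ i = 0" by (simp add: expand_nth)
  ultimately show ?thesis using coords unfolding coords_on_subspace_def by (metis eq_iff_diff_eq_0)
qed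

lemma ann_lift_in_annihilator: "ann_lift c \<in> annihilator Y"
  unfolding annihilator_def
proof safe
  fix y assume "y \<in> Y"
  have y_nth: "y $ j = (\<Sum>i\<in>I. y$i * e i $ j)" for j
    using arg_cong[where f = "\<lambda>v. v $ j", OF expand_coords[OF \<open>y \<in> Y\<close>]]
    by (simp add: expand_def)
  have "pairing (ann_lift c) y
      = (\<Sum>j\<in>I. ann_lift c $ j * y $ j) + (\<Sum>j\<in>-I. ann_lift c $ j * y $ j)"
    unfolding pairing_def by (rule sum_UNIV_Compl_split)
  also have "(\<Sum>j\<in>I. ann_lift c $ j * y $ j) = - (\<Sum>j\<in>I. \<Sum>l\<in>-I. y$j * c$l * e j $ l)"
    unfolding ann_lift_def by (simp add: sum_negf sum_distrib_left sum_distrib_right mult_ac)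
  also have "(\<Sum>j\<in>-I. ann_lift c $ j * y $ j) = (\<Sum>l\<in>-I. \<Sum>j\<in>I. y$j * c$l * e j $ l)"
    unfolding ann_lift_def by (subst y_nth) (simp add: sum_distrib_left mult_ac)
  also have "\<dots> = (\<Sum>j\<in>I. \<Sum>l\<in>-I. y$j * c$l * e j $ l)" by (rule sum.swap)
  finally show "pairing (ann_lift c) y = 0" by simp
qed

lemma ann_lift_annihilator:
  assumes p: "p \<in> annihilator Y"
  shows "ann_lift p = p"
proof -
  have "p $ j = - (\<Sum>l\<in>-I. p$l * e j $ l)" if "j \<in> I" for j
  proof -
    have "0 = pairing p (e j)" using p basis_in unfolding annihilator_def by auto
    also have "\<dots> = (\<Sum>l\<in>I. p$l * e j $ l) + (\<Sum>l\<in>-I. p$l * e j $ l)"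
      unfolding pairing_def by (rule sum_UNIV_Compl_split)
    also have "(\<Sum>l\<in>I. p$l * e j $ l) = p $ j"
      using \<open>j \<in> I\<close> by (simp add: basis_nth if_distrib cong: if_cong)
    finally show ?thesis by (simp add: eq_neg_iff_add_eq_0)
  qed
  then show ?thesis unfolding ann_lift_def by (auto simp: vec_eq_iff)
qed

lemma ann_lift_cong: "(\<forall>l. l \<notin> I \<longrightarrow> c$l = d$l) \<Longrightarrow> ann_lift c = ann_lift d"
  unfolding ann_lift_def by (auto simp: vec_eq_iff)

lemma ann_lift_nth_outside: "j \<notin> I \<Longrightarrow> ann_lift c $ j = c $ j"
  unfolding ann_lift_def by simp

lemma scalar_holo_at_ann_lift: "scalar_holo_at (\<lambda>x. ann_lift x $ j) x"
  unfolding ann_lift_def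
  by (cases "j \<in> I")
     (auto intro!: scalar_holo_at_minus scalar_holo_at_sum scalar_holo_at_mult
        scalar_holo_at_nth scalar_holo_at_const)

definition coord_domain :: "(complex^'n) set" where
  "coord_domain = {x. \<forall>j. ann_lift x $ j \<noteq> 0}"

definition coord_inv :: "complex^'n \<Rightarrow> complex^'n \<Rightarrow> (complex^'n) \<times> (complex^'n)" where
  "coord_inv a x = r_map a (expand (\<chi> i. x$i - a$i / ann_lift x $ i), ann_lift x)"

lemma open_coord_domain: "open coord_domain"
proof -
  have "open {x. ann_lift x $ j \<noteq> 0}" for j
    using scalar_holo_at_continuous[OF scalar_holo_at_ann_lift]
    by (intro open_Collect_neq continuous_at_imp_continuous_on) auto
  moreover have "coord_domain = (\<Inter>j. {x. ann_lift x $ j \<noteq> 0})"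
    unfolding coord_domain_def by auto
  ultimately show ?thesis by auto
qed

lemma coord_inv_coord_map:
  assumes "z \<in> L_set Y a"
  shows "coord_inv a (coord_map I z) = z" and "coord_map I z \<in> coord_domain"
proof -
  obtain q p where q: "q \<in> Y" and p: "p \<in> annihilator Y" and p_nz: "\<forall>j. p$j \<noteq> 0"
    and z: "z = r_map a (q, p)"
    using assms unfolding L_set_def by auto
  have x: "coord_map I z = (\<chi> j. if j \<in> I then q$j + a$j / p$j else p$j)"
    unfolding coord_map_def z r_map_def by (simp add: vec_eq_iff)
  have p_eq: "ann_lift (coord_map I z) = p"
    using ann_lift_cong[of "coord_map I z" p] ann_lift_annihilator[OF p] x by simp
  have "expand (\<chi> i. coord_map I z $ i - a$i / p $ i) = expand q"
    by (rule expand_cong) (simp add: x)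
  then have q_eq: "expand (\<chi> i. coord_map I z $ i - a$i / p $ i) = q"
    by (simp add: expand_coords[OF q])
  show "coord_inv a (coord_map I z) = z"
    unfolding coord_inv_def p_eq q_eq using z by simp
  show "coord_map I z \<in> coord_domain"
    unfolding coord_domain_def using p_nz p_eq by simp
qed

lemma coord_map_coord_inv:
  assumes "x \<in> coord_domain"
  shows "coord_inv a x \<in> L_set Y a" and "coord_map I (coord_inv a x) = x"
proof -
  have nz: "\<forall>j. ann_lift x $ j \<noteq> 0" using assms unfolding coord_domain_def by simp
  show "coord_inv a x \<in> L_set Y a"
    unfolding coord_inv_def L_set_def
    using expand_in_subspace ann_lift_in_annihilator nz by auto
  show "coord_map I (coord_inv a x) = x"
  proof (rule vec_eq_iff[THEN iffD2], intro allI)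
    fix j
    show "coord_map I (coord_inv a x) $ j = x $ j"
      using nz by (cases "j \<in> I")
        (simp_all add: coord_map_def coord_inv_def r_map_def expand_nth ann_lift_nth_outside)
  qed
qed

lemma cholo_at_coord_inv:
  assumes "x \<in> coord_domain"
  shows "cholo_at (coord_inv a) x"
proof -
  have nz: "\<forall>j. ann_lift x $ j \<noteq> 0" using assms unfolding coord_domain_def by simp
  have "cholo_at (\<lambda>x. ((\<chi> j. (\<Sum>i\<in>I. (x$i - a$i / ann_lift x $ i) * e i $ j)
                                  + a$j / ann_lift x $ j),
                             (\<chi> j. ann_lift x $ j))) x" (is "cholo_at ?inv x")
    using nz by (intro cholo_at_vec_lambda_Pair)
      (auto intro!: scalar_holo_at_add scalar_holo_at_sum scalar_holo_at_mult scalar_holo_at_diff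
         scalar_holo_at_divide scalar_holo_at_nth scalar_holo_at_const scalar_holo_at_ann_lift)
  moreover have "?inv = coord_inv a"
    unfolding coord_inv_def r_map_def expand_def
    by (simp add: algebra_simps)
  ultimately show ?thesis by simp
qed

lemma coordinate_system_on_L_set: "coordinate_system_on (coord_map I) (L_set Y a)"
  unfolding coordinate_system_on_def
proof (intro exI conjI)
  show "open coord_domain" by (rule open_coord_domain)
  show "bij_betw (coord_map I) (L_set Y a) coord_domain"
    by (rule bij_betw_byWitness[where f' = "coord_inv a"])
       (use coord_inv_coord_map coord_map_coord_inv in auto)
  show "\<forall>z\<in>L_set Y a. coord_inv a (coord_map I z) = z"
    using coord_inv_coord_map(1) by blast
  show "\<forall>x\<in>coord_domain. cholo_at (coord_inv a) x"
    using cholo_at_coord_inv by blast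
qed

end

lemma dual_coord_basis_exists:
  assumes "vec.subspace Y" "coords_on_subspace I Y"
  obtains e where "dual_coord_basis Y I e"
proof -
  have "\<exists>y\<in>Y. \<forall>i'\<in>I. y $ i' = (if i' = i then 1 else 0)" for i
  proof -
    obtain y where "y \<in> Y" "\<forall>i'\<in>I. y $ i' = (\<chi> j. if j = i then 1 else 0) $ i'"
      using assms(2) unfolding coords_on_subspace_def by blast
    then show ?thesis by (intro bexI[of _ y]) auto
  qed
  then obtain e where "\<And>i. e i \<in> Y" "\<And>i i'. i' \<in> I \<Longrightarrow> e i $ i' = (if i' = i then 1 else 0)"
    by metis
  with assms show ?thesis by (intro that) (unfold_locales, auto)
qed

theorem lemma4p2:
  fixes Y :: "(complex^'n) set" and a :: "complex^'n" and I :: "'n set" and k :: nat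
  assumes "vec.subspace Y"
    and "vec.dim Y = k"
    and "\<forall>j. a$j \<noteq> 0"
    and "\<forall>j. \<not> Y \<subseteq> {q. q$j = 0}"
    and "\<forall>j. \<not> annihilator Y \<subseteq> {p. p$j = 0}"
    and "card I = k"
    and "coords_on_subspace I Y"
  shows "coordinate_system_on (coord_map I) (L_set Y a)"
proof -
  obtain e where "dual_coord_basis Y I e"
    using dual_coord_basis_exists[OF assms(1,7)] .
  then show ?thesis by (rule dual_coord_basis.coordinate_system_on_L_set)
qed

end
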